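(* Let $d\ge1$, $L>0$, $c>0$, $\Delta t>0$, and let $p(\mathbf x,t)$ and $\mathbf v(\mathbf x,t)\in\mathbb{R}^d$ be smooth $L$-periodic (in each coordinate) functions whose Fourier coefficients satisfy, for all $\mathbf k\in(2\pi/L)\mathbb{Z}^d$ and all $t$ in the relevant range, $$\hat p(\mathbf k,t+\Delta t)=\hat p(\mathbf k,t)+\big(e^{ic|\mathbf k|\Delta t/2}-e^{-ic|\mathbf k|\Delta t/2}\big)\,\hat{\mathbf k}\cdot\hat{\mathbf v}(\mathbf k,t+\tfrac{\Delta t}{2}),$$ $$\hat{\mathbf v}(\mathbf k,t+\tfrac{\Delta t}{2})=\hat{\mathbf v}(\mathbf k,t-\tfrac{\Delta t}{2})+\big(e^{ic|\mathbf k|\Delta t/2}-e^{-ic|\mathbf k|\Delta t/2}\big)\,\hat{\mathbf k}\,\hat p(\mathbf k,t).$$ Define $\mathbf v_d=\mathcal G\mathcal G^{*}\mathbf v$, $\mathbf v_c=\mathbf v-\mathbf v_d$, $$P_\pm(\cdot,t)=p(\cdot,t)\mp S_\pm\mathcal G^{*}\mathbf v_d(\cdot,t-\tfrac{\Delta t}{2}),\qquad \mathbf V_\pm(\cdot,t+\tfrac{\Delta t}{2})=\mathbf v_d(\cdot,t+\tfrac{\Delta t}{2})\mp\mathcal G S_\pm p(\cdot,t).$$ Then for every multi-index $\alpha$, writing $\|f\|_\alpha=\|\partial^\alpha f\|_{L^2}$, $$\|P_\pm(\cdot,t+\Delta t)\|_\alpha=\|\mathbf V_\pm(\cdot,t+\tfrac{\Delta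 t}{2})\|_\alpha,\quad \|\mathbf V_\pm(\cdot,t+\tfrac{\Delta t}{2})\|_\alpha=\|P_\pm(\cdot,t)\|_\alpha,\quad \|\mathbf v_c(\cdot,t+\tfrac{\Delta t}{2})\|_\alpha=\|\mathbf v_c(\cdot,t-\tfrac{\Delta t}{2})\|_\alpha.$$
   Context: Here $\hat f(\mathbf k)$ denotes the Fourier coefficient of a periodic function on $[0,L)^d$, $|\mathbf k|=(k_1^2+\dots+k_d^2)^{1/2}$, and $\hat{\mathbf k}=\mathbf k/|\mathbf k|$ for $\mathbf k\ne0$, while $\hat{\mathbf 0}$ is set to an arbitrarily fixed unit vector. $S_\pm$ is the Fourier multiplier $\widehat{S_\pm f}(\mathbf k)=e^{\pm ic|\mathbf k|\Delta t/2}\hat f(\mathbf k)$ (acting componentwise on vector fields). $\mathcal G$ maps scalar functions to vector fields by $\widehat{\mathcal G f}(\mathbf k)=\hat{\mathbf k}\hat f(\mathbf k)$, and $\mathcal G^*$ is its $L^2$-adjoint, $\widehat{\mathcal G^*\mathbf w}(\mathbf k)=\hat{\mathbf k}\cdot\hat{\mathbf w}(\mathbf k)$. These Fourier formulas are the exact two-level (leapfrog) relations for the system $p_t=c\nabla\cdot\mathbf v$, $\mathbf v_t=c\nabla p$. *)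

theory Defs
  imports "HOL-Analysis.Analysis"
begin

text \<open>An L-periodic function on [0,L)^d is represented by its Fourier coefficients,
  indexed by m in Z^d, the wave vector being k = (2 pi / L) m.\<close>

definition kvec :: "real \<Rightarrow> int^'d \<Rightarrow> real^'d" where
  "kvec L m = (\<chi> j. 2 * pi / L * of_int (m $ j))"

text \<open>unit wave vector; at k = 0 it is the arbitrarily fixed unit vector u\<close>
definition khat :: "real \<Rightarrow> real^'d \<Rightarrow> int^'d \<Rightarrow> real^'d" where
  "khat L u m = (if kvec L m = 0 then u else (1 / norm (kvec L m)) *\<^sub>R kvec L m)"

definition Sop :: "real \<Rightarrow> real \<Rightarrow> real \<Rightarrow> real \<Rightarrow> (int^'d \<Rightarrow> complex) \<Rightarrow> int^'d \<Rightarrow> complex" where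
  "Sop \<sigma> L c dt f m = exp (complex_of_real \<sigma> * \<i> * c * norm (kvec L m) * dt / 2) * f m"

definition Gop :: "real \<Rightarrow> real^'d \<Rightarrow> (int^'d \<Rightarrow> complex) \<Rightarrow> int^'d \<Rightarrow> complex^'d" where
  "Gop L u f m = (\<chi> j. complex_of_real (khat L u m $ j) * f m)"

definition Gstar :: "real \<Rightarrow> real^'d \<Rightarrow> (int^'d \<Rightarrow> complex^'d) \<Rightarrow> int^'d \<Rightarrow> complex" where
  "Gstar L u w m = (\<Sum>j\<in>UNIV. complex_of_real (khat L u m $ j) * (w m $ j))"

text \<open>||d^alpha f||_{L^2([0,L)^d)} computed via Parseval from the Fourier coefficients
  (f(x) = sum_k fhat(k) e^{i k.x}, so ||f||^2 = L^d sum_k |fhat(k)|^2).\<close>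
definition sobnorm :: "real \<Rightarrow> nat^'d \<Rightarrow> (int^'d \<Rightarrow> complex) \<Rightarrow> real" where
  "sobnorm L \<alpha> f = sqrt (L ^ CARD('d) *
     (\<Sum>\<^sub>\<infinity>m. (\<Prod>j\<in>UNIV. (kvec L m $ j) ^ (2 * \<alpha> $ j)) * (cmod (f m))\<^sup>2))"

definition sobnormv :: "real \<Rightarrow> nat^'d \<Rightarrow> (int^'d \<Rightarrow> complex^'d) \<Rightarrow> real" where
  "sobnormv L \<alpha> w = sqrt (L ^ CARD('d) *
     (\<Sum>\<^sub>\<infinity>m. (\<Prod>j\<in>UNIV. (kvec L m $ j) ^ (2 * \<alpha> $ j)) * (norm (w m))\<^sup>2))"

text \<open>smoothness of a periodic function = rapid decay of its Fourier coefficients\<close>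
definition rapid_decay :: "real \<Rightarrow> (int^'d \<Rightarrow> 'a::real_normed_vector) \<Rightarrow> bool" where
  "rapid_decay L f \<longleftrightarrow> (\<forall>n::nat. \<exists>C. \<forall>m. (1 + norm (kvec L m)) ^ n * norm (f m) \<le> C)"

end

theory Submission
  imports Defs
begin

text \<open>The scheme decouples into Fourier modes. In a mode with phase z = exp (sigma i c |k| dt / 2),
  |z| = 1, both updates add sigma (z - 1/z) times the other unknown: to p, and to the scalar
  a = khat . vhat, while vhat - khat a is left untouched. Then p' - sigma z a' = - sigma z (a' - sigma z p)
  and a' - sigma z p = - sigma z (p - sigma z a), so the coefficients of P and V keep their moduli
  from step to step (G is an isometry mode by mode), and the Sobolev norms only see these moduli.\<close>

lemma norm_khat:
  assumes "norm u = 1"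
  shows "norm (khat L u m) = 1"
  using assms by (simp add: khat_def)

lemma sum_khat_squares:
  assumes "norm u = 1"
  shows "(\<Sum>j\<in>UNIV. khat L u m $ j * khat L u m $ j) = 1"
proof -
  have "(\<Sum>j\<in>UNIV. khat L u m $ j * khat L u m $ j) = (norm (khat L u m))\<^sup>2"
    by (simp add: power2_norm_eq_inner inner_vec_def)
  then show ?thesis
    using norm_khat[OF assms] by simp
qed

lemma Gstar_Gop:
  assumes "norm u = 1"
  shows "Gstar L u (Gop L u f) = f"
proof
  fix m
  have "Gstar L u (Gop L u f) m
      = complex_of_real (\<Sum>j\<in>UNIV. khat L u m $ j * khat L u m $ j) * f m"
    by (simp add: Gstar_def Gop_def sum_distrib_right mult.assoc)
  then show "Gstar L u (Gop L u f) m = f m"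
    using sum_khat_squares[OF assms] by simp
qed

lemma Gstar_add: "Gstar L u (\<lambda>m. w m + w' m) = (\<lambda>m. Gstar L u w m + Gstar L u w' m)"
  by (simp add: fun_eq_iff Gstar_def distrib_left sum.distrib)

lemma Gop_add: "Gop L u (\<lambda>m. f m + g m) m = Gop L u f m + Gop L u g m"
  by (simp add: Gop_def vec_eq_iff distrib_left)

lemma norm_Gop:
  assumes "norm u = 1"
  shows "norm (Gop L u f m) = cmod (f m)"
proof -
  have "norm (Gop L u f m) = cmod (f m) * L2_set (\<lambda>j. \<bar>khat L u m $ j\<bar>) UNIV"
    by (simp add: norm_vec_def Gop_def norm_mult mult.commute L2_set_right_distrib)
  also have "L2_set (\<lambda>j. \<bar>khat L u m $ j\<bar>) UNIV = norm (khat L u m)"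
    by (simp add: norm_vec_def)
  finally show ?thesis
    using norm_khat[OF assms] by simp
qed

lemma Gop_diff_scaleR: "Gop L u f m - \<sigma> *\<^sub>R Gop L u g m = Gop L u (\<lambda>m. f m - \<sigma> * g m) m"
  by (simp add: Gop_def vec_eq_iff algebra_simps scaleR_conv_of_real[where 'a=complex])

lemma diff_Gop_Gstar_add_Gop:
  assumes "norm u = 1"
  shows "(v m + Gop L u g m) - Gop L u (Gstar L u (\<lambda>m. v m + Gop L u g m)) m
       = v m - Gop L u (Gstar L u v) m"
  by (simp add: Gstar_add Gstar_Gop[OF assms] Gop_add)

lemma sobnormv_eq_sobnorm:
  assumes "\<And>m. norm (w m) = cmod (f m)"
  shows "sobnormv L \<alpha> w = sobnorm L \<alpha> f"
  using assms by (simp add: sobnorm_def sobnormv_def)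

definition phase :: "real \<Rightarrow> real \<Rightarrow> real \<Rightarrow> real \<Rightarrow> int^'d \<Rightarrow> complex" where
  "phase \<sigma> L c dt m = exp (complex_of_real \<sigma> * \<i> * c * norm (kvec L m) * dt / 2)"

lemma Sop_eq_phase: "Sop \<sigma> L c dt f m = phase \<sigma> L c dt m * f m"
  by (simp add: Sop_def phase_def)

lemma norm_phase: "cmod (phase \<sigma> L c dt m) = 1"
  by (simp add: phase_def norm_exp_eq_Re)

lemma exp_diff_eq_phase:
  assumes "\<sigma> = 1 \<or> \<sigma> = -1"
  shows "exp (\<i> * c * norm (kvec L m) * dt / 2) - exp (- \<i> * c * norm (kvec L m) * dt / 2)
       = \<sigma> * (phase \<sigma> L c dt m - inverse (phase \<sigma> L c dt m))"
  using assms by (auto simp: phase_def exp_minus)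

lemma leapfrog_half_step_norm:
  fixes p a z :: complex and \<sigma> :: real
  assumes "\<sigma> = 1 \<or> \<sigma> = -1" and "cmod z = 1"
  shows "cmod (p + \<sigma> * (z - inverse z) * a - \<sigma> * z * a) = cmod (a - \<sigma> * z * p)"
proof -
  have "z \<noteq> 0"
    using assms(2) by auto
  with assms(1) have "a - \<sigma> * z * p = - \<sigma> * z * (p + \<sigma> * (z - inverse z) * a - \<sigma> * z * a)"
    by (auto simp: algebra_simps)
  moreover have "cmod (- \<sigma> * z) = 1"
    using assms by (auto simp: norm_mult)
  ultimately show ?thesis
    by (simp add: norm_mult)
qed

lemma leapfrog_mode_norms:
  fixes p0 p1 a0 a1 z :: complex and \<sigma> :: real
  assumes "\<sigma> = 1 \<or> \<sigma> = -1" and "cmod z = 1"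
    and a1: "a1 = a0 + \<sigma> * (z - inverse z) * p0"
    and p1: "p1 = p0 + \<sigma> * (z - inverse z) * a1"
  shows "cmod (p1 - \<sigma> * z * a1) = cmod (a1 - \<sigma> * z * p0)"
    and "cmod (a1 - \<sigma> * z * p0) = cmod (p0 - \<sigma> * z * a0)"
  unfolding p1 a1 by (rule leapfrog_half_step_norm[OF assms(1,2)])+

theorem mainTheorem2:
  fixes L c dt :: real and u :: "real^'d"
    and p :: "real \<Rightarrow> int^'d \<Rightarrow> complex" and v :: "real \<Rightarrow> int^'d \<Rightarrow> complex^'d"
    and \<sigma> :: real and \<alpha> :: "nat^'d" and t :: real
  assumes L: "L > 0" and c: "c > 0" and dt: "dt > 0" and u: "norm u = 1"
    and p_real: "\<And>s m. p s (- m) = cnj (p s m)"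
    and v_real: "\<And>s m j. v s (- m) $ j = cnj (v s m $ j)"
    and p_smooth: "\<And>s. rapid_decay L (p s)"
    and v_smooth: "\<And>s. rapid_decay L (v s)"
    and eq_p: "\<And>s m. p (s + dt) m = p s m +
        (exp (\<i> * c * norm (kvec L m) * dt / 2) - exp (- \<i> * c * norm (kvec L m) * dt / 2))
        * Gstar L u (v (s + dt / 2)) m"
    and eq_v: "\<And>s m j. v (s + dt / 2) m $ j = v (s - dt / 2) m $ j +
        (exp (\<i> * c * norm (kvec L m) * dt / 2) - exp (- \<i> * c * norm (kvec L m) * dt / 2))
        * complex_of_real (khat L u m $ j) * p s m"
    and sigma: "\<sigma> = 1 \<or> \<sigma> = -1"
  defines "vd \<equiv> \<lambda>s. Gop L u (Gstar L u (v s))"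
  defines "vc \<equiv> \<lambda>s m. v s m - vd s m"
  defines "P \<equiv> \<lambda>s m. p s m - complex_of_real \<sigma> * Sop \<sigma> L c dt (Gstar L u (vd (s - dt / 2))) m"
  defines "V \<equiv> \<lambda>s m. vd (s + dt / 2) m - \<sigma> *\<^sub>R Gop L u (Sop \<sigma> L c dt (p s)) m"
  shows "sobnorm L \<alpha> (P (t + dt)) = sobnormv L \<alpha> (V t)
       \<and> sobnormv L \<alpha> (V t) = sobnorm L \<alpha> (P t)
       \<and> sobnormv L \<alpha> (vc (t + dt / 2)) = sobnormv L \<alpha> (vc (t - dt / 2))"
proof -
  let ?z = "phase \<sigma> L c dt"
  define a where "a s = Gstar L u (v s)" for s
  define g where "g s m = complex_of_real \<sigma> * (?z m - inverse (?z m)) * p s m" for s m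
  have v_step: "v (s + dt / 2) = (\<lambda>m. v (s - dt / 2) m + Gop L u (g s) m)" for s
    by (simp add: fun_eq_iff vec_eq_iff Gop_def g_def eq_v[unfolded exp_diff_eq_phase[OF sigma]]
        mult_ac)
  have a_step: "a (t + dt / 2) m = a (t - dt / 2) m + \<sigma> * (?z m - inverse (?z m)) * p t m" for m
    unfolding a_def v_step Gstar_add Gstar_Gop[OF u] g_def ..
  have p_step: "p (t + dt) m = p t m + \<sigma> * (?z m - inverse (?z m)) * a (t + dt / 2) m" for m
    unfolding a_def by (rule eq_p[unfolded exp_diff_eq_phase[OF sigma]])
  have P_eq: "P s m = p s m - \<sigma> * ?z m * a (s - dt / 2) m" for s m
    by (simp add: P_def vd_def Gstar_Gop[OF u] Sop_eq_phase a_def)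
  have norm_V: "norm (V t m) = cmod (a (t + dt / 2) m - \<sigma> * ?z m * p t m)" for m
    by (simp add: V_def vd_def a_def Sop_eq_phase Gop_diff_scaleR norm_Gop[OF u] mult.assoc)
  note mode = leapfrog_mode_norms[OF sigma norm_phase a_step p_step]
  have "t + dt - dt / 2 = t + dt / 2"
    by simp
  then have "sobnorm L \<alpha> (P (t + dt)) = sobnormv L \<alpha> (V t)"
    by (intro sobnormv_eq_sobnorm[symmetric]) (simp only: norm_V P_eq mode(1))
  moreover have "sobnormv L \<alpha> (V t) = sobnorm L \<alpha> (P t)"
    by (intro sobnormv_eq_sobnorm) (simp only: norm_V P_eq mode(2))
  moreover have "vc (t + dt / 2) = vc (t - dt / 2)"
    by (simp add: fun_eq_iff vc_def vd_def v_step diff_Gop_Gstar_add_Gop[OF u])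
  ultimately show ?thesis
    by (simp only:)
qed

end
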